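(* Let $\Gamma$ be a finite dynamic game with ordinal preferences and perfect recall, let $u=(u_j)_{j\in I}$ be a profile of utility functions with $u_j\in\mathcal U_j$ for every $j$, and let $R\subseteq S$ be a restriction. Then $\mathbb M(R)[u]\subseteq\mathbb U(R)$.
   Context: A finite dynamic game with ordinal preferences and perfect recall $\Gamma$ consists of: a finite set of players $I$; a finite rooted tree of histories (finite sequences of action profiles, simultaneous moves allowed) with terminal histories $Z$; for each $i$ a partition $H_i$ of the non-terminal histories where $i$ is active (at least two actions) into information sets with identical available actions; perfect recall; complete transitive preferences $\succsim_i$ on $Z$ (asymmetric part $\succ_i$). Strategies of $i$ are equivalence classes of behaviorally equivalent standard strategies (action assignments to $H_i$, identified when they allow the same information sets and prescribe the same actions there); $S_i$ is the finite set of strategies, $S=\prod_jS_j$, $S_{-i}=\prod_{j\ne i}S_j$, $\zeta:S\to Z$ the outcome map. For $h\in H_i$, $S_i(h)$, $S_{-i}(h)$ are strategies of $i$, resp. profiles of others, reaching $h$; $H_i(s_i)=\{h\in H_i:s_i\in S_i(h)\}$. A restriction is a nonempty $R=\prod_jR_j\subseteq S$; $R_i(h)=R_i\cap S_i(h)$, $R_{-i}(h)=R_{-i}\cap S_{-i}(h)$, $R^i(h)=R_i(h)\times R_{-i}(h)$. For $P=P_i\times P_{-i}$ ($P_{-i}\subseteq S_{-i}$ not necessarily a product), $s_i\in P_i$ is weakly dominated relative to $P$ by $t_i\in P_i$ if $\zeta(t_i,s_{-i})\succsim_i\zeta(s_i,s_{-i})$ for all $s_{-i}\in P_{-i}$ with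 $\succ_i$ for some; B-dominated w.r.t. $P$ if for every nonempty $Q_{-i}\subseteq P_{-i}$ it is weakly dominated relative to $P_i\times Q_{-i}$ by some strategy in $P_i$. $s_i\in R_i$ is conditionally B-dominated w.r.t. $R$ if some $h\in H_i(s_i)$ has $R^i(h)\ne\emptyset$ and $s_i$ B-dominated w.r.t. $R^i(h)$. $\mathbb U_i(R)$ is the set of $s_i\in R_i$ not conditionally B-dominated w.r.t. $R$; $\mathbb U(R)=\prod_j\mathbb U_j(R)$. $\mathcal U_i$ is the set of $u_i:Z\to\mathbb R$ with $u_i(z)\ge u_i(z')\iff z\succsim_iz'$. Given $u_i$, $s_i\in P_i$ is strictly dominated relative to $P=P_i\times P_{-i}$ by a mixed strategy if there is a probability distribution $\sigma$ on $P_i$ with $\sum_{t_i\in P_i}\sigma(t_i)u_i(\zeta(t_i,s_{-i}))>u_i(\zeta(s_i,s_{-i}))$ for every $s_{-i}\in P_{-i}$. $\mathbb M_i(R)[u_i]$ is the set of $s_i\in R_i$ such that for every $h\in H_i(s_i)$ with $R^i(h)\ne\emptyset$, $s_i$ is not strictly dominated relative to $R^i(h)$ by a mixed strategy (given $u_i$); $\mathbb M(R)[u]=\prod_j\mathbb M_j(R)[u_j]$. *)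

theory Defs
  imports Complex_Main "HOL-Library.FuncSet"
begin

text \<open>An action profile is a function
  'i => 'a (only its values on the player set matter); a history is a finite list of
  action profiles. A (reduced)
  strategy of player i is a partial map from information sets of i to actions.\<close>

type_synonym ('i,'a) hist = "('i \<Rightarrow> 'a) list"
type_synonym ('i,'a) infoset = "('i,'a) hist set"
type_synonym ('i,'a) strat = "('i,'a) infoset \<Rightarrow> 'a option"

record ('i,'a) game =
  players :: "'i set"
  hists   :: "('i,'a) hist set"
  acts    :: "'i \<Rightarrow> ('i,'a) hist \<Rightarrow> 'a set"
  info    :: "'i \<Rightarrow> ('i,'a) infoset set"
  pref    :: "'i \<Rightarrow> ('i,'a) hist \<Rightarrow> ('i,'a) hist \<Rightarrow> bool"  \<comment> \<open>pref i z z' : z \<succeq>_i z'\<close>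

definition terminal :: "('i,'a) game \<Rightarrow> ('i,'a) hist \<Rightarrow> bool" where
  "terminal G h \<longleftrightarrow> h \<in> hists G \<and> (\<forall>a. h @ [a] \<notin> hists G)"

definition Zset :: "('i,'a) game \<Rightarrow> ('i,'a) hist set" where
  "Zset G = {h. terminal G h}"

definition nonterm :: "('i,'a) game \<Rightarrow> ('i,'a) hist \<Rightarrow> bool" where
  "nonterm G h \<longleftrightarrow> h \<in> hists G \<and> \<not> terminal G h"

definition active :: "('i,'a) game \<Rightarrow> 'i \<Rightarrow> ('i,'a) hist \<Rightarrow> bool" where
  "active G i h \<longleftrightarrow> nonterm G h \<and> i \<in> players G \<and>
     (\<exists>a\<in>acts G i h. \<exists>b\<in>acts G i h. a \<noteq> b)"

definition infoset_of :: "('i,'a) game \<Rightarrow> 'i \<Rightarrow> ('i,'a) hist \<Rightarrow> ('i,'a) infoset" where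
  "infoset_of G i h = (THE X. X \<in> info G i \<and> h \<in> X)"

text \<open>Experience of player i along h: the sequence of (own information set, own action)
  pairs at the prefixes of h where i is active (Kuhn / Osborne--Rubinstein perfect recall).\<close>
definition experience :: "('i,'a) game \<Rightarrow> 'i \<Rightarrow> ('i,'a) hist \<Rightarrow> (('i,'a) infoset \<times> 'a) list" where
  "experience G i h =
     map (\<lambda>k. (infoset_of G i (take k h), (h ! k) i))
         (filter (\<lambda>k. active G i (take k h)) [0..<length h])"

definition finite_game :: "('i,'a) game \<Rightarrow> bool" where
  "finite_game G \<longleftrightarrow>
     finite (players G) \<and> finite (hists G) \<and>
     [] \<in> hists G \<and>
     (\<forall>h a. h @ [a] \<in> hists G \<longrightarrow> h \<in> hists G) \<and>
     (\<forall>h. nonterm G h \<longrightarrow>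
        (\<forall>i\<in>players G. finite (acts G i h) \<and> acts G i h \<noteq> {}) \<and>
        (\<forall>a. h @ [a] \<in> hists G \<longleftrightarrow> a \<in> (\<Pi>\<^sub>E j\<in>players G. acts G j h))) \<and>
     (\<forall>i\<in>players G.
        \<Union>(info G i) = {h. active G i h} \<and>
        (\<forall>X\<in>info G i. X \<noteq> {}) \<and>
        (\<forall>X\<in>info G i. \<forall>Y\<in>info G i. X \<noteq> Y \<longrightarrow> X \<inter> Y = {}) \<and>
        (\<forall>X\<in>info G i. \<forall>h\<in>X. \<forall>h'\<in>X. acts G i h = acts G i h') \<and>
        (\<forall>X\<in>info G i. \<forall>h\<in>X. \<forall>h'\<in>X. experience G i h = experience G i h') \<and>
        (\<forall>z\<in>Zset G. \<forall>z'\<in>Zset G. pref G i z z' \<or> pref G i z' z) \<and>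
        (\<forall>z\<in>Zset G. \<forall>z'\<in>Zset G. \<forall>z''\<in>Zset G.
            pref G i z z' \<longrightarrow> pref G i z' z'' \<longrightarrow> pref G i z z''))"

text \<open>Action profile played at h under a (partial) strategy profile p: active players
  follow their strategies at their information set, inactive players take their unique action.\<close>
definition next_prof :: "('i,'a) game \<Rightarrow> ('i \<Rightarrow> ('i,'a) strat) \<Rightarrow> ('i,'a) hist \<Rightarrow> ('i \<Rightarrow> 'a)" where
  "next_prof G p h = restrict (\<lambda>j.
       if active G j h then the (p j (infoset_of G j h)) else the_elem (acts G j h)) (players G)"

inductive on_path :: "('i,'a) game \<Rightarrow> ('i \<Rightarrow> ('i,'a) strat) \<Rightarrow> ('i,'a) hist \<Rightarrow> bool"
  for G p where
  Nil: "on_path G p []"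
| step: "on_path G p h \<Longrightarrow> nonterm G h \<Longrightarrow> on_path G p (h @ [next_prof G p h])"

definition zeta :: "('i,'a) game \<Rightarrow> ('i \<Rightarrow> ('i,'a) strat) \<Rightarrow> ('i,'a) hist" where
  "zeta G p = (THE z. z \<in> Zset G \<and> on_path G p z)"

definition std_strats :: "('i,'a) game \<Rightarrow> 'i \<Rightarrow> ('i,'a) strat set" where
  "std_strats G i = {s. dom s = info G i \<and> (\<forall>X\<in>info G i. \<forall>h\<in>X. the (s X) \<in> acts G i h)}"

definition allows :: "('i,'a) game \<Rightarrow> 'i \<Rightarrow> ('i,'a) strat \<Rightarrow> ('i,'a) infoset \<Rightarrow> bool" where
  "allows G i s X \<longleftrightarrow> (\<exists>\<sigma>. (\<forall>j\<in>players G. \<sigma> j \<in> std_strats G j) \<and> \<sigma> i = s \<and>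
                          (\<exists>h\<in>X. on_path G \<sigma> h))"

text \<open>Strategies = equivalence classes of behaviourally equivalent standard strategies;
  each class is represented canonically by the restriction of any member to the
  information sets it allows (two standard strategies are identified iff these restrictions agree).\<close>
definition Strats :: "('i,'a) game \<Rightarrow> 'i \<Rightarrow> ('i,'a) strat set" where
  "Strats G i = (\<lambda>s. s |` {X \<in> info G i. allows G i s X}) ` std_strats G i"

definition Strats_others :: "('i,'a) game \<Rightarrow> 'i \<Rightarrow> ('i \<Rightarrow> ('i,'a) strat) set" where
  "Strats_others G i = (\<Pi>\<^sub>E j\<in>players G - {i}. Strats G j)"

definition join :: "'i \<Rightarrow> ('i,'a) strat \<Rightarrow> ('i \<Rightarrow> ('i,'a) strat) \<Rightarrow> ('i \<Rightarrow> ('i,'a) strat)" where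
  "join i si smi = smi(i := si)"

definition reaches :: "('i,'a) game \<Rightarrow> ('i \<Rightarrow> ('i,'a) strat) \<Rightarrow> ('i,'a) infoset \<Rightarrow> bool" where
  "reaches G p X \<longleftrightarrow> (\<exists>h\<in>X. on_path G p h)"

definition Strats_at :: "('i,'a) game \<Rightarrow> 'i \<Rightarrow> ('i,'a) infoset \<Rightarrow> ('i,'a) strat set" where
  "Strats_at G i X = {si \<in> Strats G i. \<exists>smi\<in>Strats_others G i. reaches G (join i si smi) X}"

definition Strats_others_at :: "('i,'a) game \<Rightarrow> 'i \<Rightarrow> ('i,'a) infoset \<Rightarrow> ('i \<Rightarrow> ('i,'a) strat) set" where
  "Strats_others_at G i X = {smi \<in> Strats_others G i. \<exists>si\<in>Strats G i. reaches G (join i si smi) X}"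

definition Hs :: "('i,'a) game \<Rightarrow> 'i \<Rightarrow> ('i,'a) strat \<Rightarrow> ('i,'a) infoset set" where
  "Hs G i si = {X \<in> info G i. si \<in> Strats_at G i X}"

definition restriction :: "('i,'a) game \<Rightarrow> ('i \<Rightarrow> ('i,'a) strat set) \<Rightarrow> bool" where
  "restriction G R \<longleftrightarrow> (\<forall>j\<in>players G. R j \<subseteq> Strats G j \<and> R j \<noteq> {})"

definition R_others :: "('i,'a) game \<Rightarrow> ('i \<Rightarrow> ('i,'a) strat set) \<Rightarrow> 'i \<Rightarrow> ('i \<Rightarrow> ('i,'a) strat) set" where
  "R_others G R i = (\<Pi>\<^sub>E j\<in>players G - {i}. R j)"

definition R_at :: "('i,'a) game \<Rightarrow> ('i \<Rightarrow> ('i,'a) strat set) \<Rightarrow> 'i \<Rightarrow> ('i,'a) infoset \<Rightarrow> ('i,'a) strat set" where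
  "R_at G R i X = R i \<inter> Strats_at G i X"

definition R_others_at :: "('i,'a) game \<Rightarrow> ('i \<Rightarrow> ('i,'a) strat set) \<Rightarrow> 'i \<Rightarrow> ('i,'a) infoset \<Rightarrow> ('i \<Rightarrow> ('i,'a) strat) set" where
  "R_others_at G R i X = R_others G R i \<inter> Strats_others_at G i X"

definition strict_pref :: "('i,'a) game \<Rightarrow> 'i \<Rightarrow> ('i,'a) hist \<Rightarrow> ('i,'a) hist \<Rightarrow> bool" where
  "strict_pref G i z z' \<longleftrightarrow> pref G i z z' \<and> \<not> pref G i z' z"

definition weakly_dominated_by ::
  "('i,'a) game \<Rightarrow> 'i \<Rightarrow> ('i,'a) strat set \<Rightarrow> ('i \<Rightarrow> ('i,'a) strat) set \<Rightarrow> ('i,'a) strat \<Rightarrow> ('i,'a) strat \<Rightarrow> bool" where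
  "weakly_dominated_by G i Ps Pmi si ti \<longleftrightarrow> si \<in> Ps \<and> ti \<in> Ps \<and>
     (\<forall>smi\<in>Pmi. pref G i (zeta G (join i ti smi)) (zeta G (join i si smi))) \<and>
     (\<exists>smi\<in>Pmi. strict_pref G i (zeta G (join i ti smi)) (zeta G (join i si smi)))"

definition B_dominated ::
  "('i,'a) game \<Rightarrow> 'i \<Rightarrow> ('i,'a) strat set \<Rightarrow> ('i \<Rightarrow> ('i,'a) strat) set \<Rightarrow> ('i,'a) strat \<Rightarrow> bool" where
  "B_dominated G i Ps Pmi si \<longleftrightarrow> si \<in> Ps \<and>
     (\<forall>Q. Q \<noteq> {} \<and> Q \<subseteq> Pmi \<longrightarrow> (\<exists>ti\<in>Ps. weakly_dominated_by G i Ps Q si ti))"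

definition cond_B_dominated :: "('i,'a) game \<Rightarrow> ('i \<Rightarrow> ('i,'a) strat set) \<Rightarrow> 'i \<Rightarrow> ('i,'a) strat \<Rightarrow> bool" where
  "cond_B_dominated G R i si \<longleftrightarrow>
     (\<exists>X\<in>Hs G i si. R_at G R i X \<noteq> {} \<and> R_others_at G R i X \<noteq> {} \<and>
        B_dominated G i (R_at G R i X) (R_others_at G R i X) si)"

definition UU :: "('i,'a) game \<Rightarrow> ('i \<Rightarrow> ('i,'a) strat set) \<Rightarrow> 'i \<Rightarrow> ('i,'a) strat set" where
  "UU G R i = {si \<in> R i. \<not> cond_B_dominated G R i si}"

definition utility_rep :: "('i,'a) game \<Rightarrow> 'i \<Rightarrow> (('i,'a) hist \<Rightarrow> real) \<Rightarrow> bool" where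
  "utility_rep G i ui \<longleftrightarrow> (\<forall>z\<in>Zset G. \<forall>z'\<in>Zset G. ui z \<ge> ui z' \<longleftrightarrow> pref G i z z')"

definition strictly_dominated_mixed ::
  "('i,'a) game \<Rightarrow> 'i \<Rightarrow> (('i,'a) hist \<Rightarrow> real) \<Rightarrow> ('i,'a) strat set \<Rightarrow> ('i \<Rightarrow> ('i,'a) strat) set \<Rightarrow> ('i,'a) strat \<Rightarrow> bool" where
  "strictly_dominated_mixed G i ui Ps Pmi si \<longleftrightarrow>
     (\<exists>\<sigma>::('i,'a) strat \<Rightarrow> real. (\<forall>t\<in>Ps. \<sigma> t \<ge> 0) \<and> (\<Sum>t\<in>Ps. \<sigma> t) = 1 \<and>
        (\<forall>smi\<in>Pmi. (\<Sum>t\<in>Ps. \<sigma> t * ui (zeta G (join i t smi))) > ui (zeta G (join i si smi))))"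

definition MM :: "('i,'a) game \<Rightarrow> ('i \<Rightarrow> ('i,'a) strat set) \<Rightarrow> ('i \<Rightarrow> ('i,'a) hist \<Rightarrow> real) \<Rightarrow> 'i \<Rightarrow> ('i,'a) strat set" where
  "MM G R u i = {si \<in> R i. \<forall>X\<in>Hs G i si.
      R_at G R i X \<noteq> {} \<and> R_others_at G R i X \<noteq> {} \<longrightarrow>
      \<not> strictly_dominated_mixed G i (u i) (R_at G R i X) (R_others_at G R i X) si}"

end

theory Submission
  imports Defs
begin

text \<open>It suffices that a strategy B-dominated on a cell \<open>R\<^sup>i(h)\<close> is strictly dominated there
  by a mixed strategy, for any utility representing the preferences. Some pure strategy \<open>t\<close>
  weakly dominates it on all of \<open>R\<^sub>-\<^sub>i(h)\<close>; by induction on the set of profiles where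
  \<open>t\<close> is not strictly better, some mixture is strictly better there, and moving a small
  weight from \<open>t\<close> to that mixture gives a strictly better mixture everywhere. Utilities only
  represent preferences on terminal histories, so one also needs that every profile of
  (reduced) strategies has a terminal outcome.\<close>

lemma small_mixture_preserves_strict_bounds:
  fixes a b c :: "'s \<Rightarrow> real"
  assumes "finite A" and "\<forall>s\<in>A. b s < a s"
  shows "\<exists>e>0. e < 1 \<and> (\<forall>s\<in>A. b s < (1 - e) * a s + e * c s)"
proof -
  have "\<forall>\<^sub>F e in at_right 0. b s < (1 - e) * a s + e * c s" if "s \<in> A" for s
  proof -
    have "((\<lambda>e. (1 - e) * a s + e * c s) \<longlongrightarrow> a s) (at_right 0)"
      by (auto intro!: tendsto_eq_intros)
    then show ?thesis using order_tendstoD(1) assms(2) that by blast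
  qed
  then have "\<forall>\<^sub>F e in at_right 0. \<forall>s\<in>A. b s < (1 - e) * a s + e * c s"
    by (simp add: eventually_ball_finite assms(1))
  moreover have "\<forall>\<^sub>F e in at_right 0. e \<in> {0<..<1::real}"
    by (rule eventually_at_right_real) simp
  ultimately
  have "\<forall>\<^sub>F e in at_right (0::real). 0 < e \<and> e < 1 \<and> (\<forall>s\<in>A. b s < (1 - e) * a s + e * c s)"
    by eventually_elim auto
  then show ?thesis
    using eventually_happens'[of "at_right (0::real)"] by fastforce
qed

lemma dominated_on_subsets_imp_strictly_dominated_by_mixture:
  fixes f :: "'t \<Rightarrow> 's \<Rightarrow> real"
  assumes "finite T" and "finite Q" and "Q \<noteq> {}"
    and "\<And>Q'. Q' \<noteq> {} \<Longrightarrow> Q' \<subseteq> Q \<Longrightarrow>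
           \<exists>t\<in>T. (\<forall>s\<in>Q'. f t0 s \<le> f t s) \<and> (\<exists>s\<in>Q'. f t0 s < f t s)"
  shows "\<exists>\<sigma>. (\<forall>t\<in>T. 0 \<le> \<sigma> t) \<and> sum \<sigma> T = 1 \<and> (\<forall>s\<in>Q. f t0 s < (\<Sum>t\<in>T. \<sigma> t * f t s))"
  using assms(2-4)
proof (induction Q rule: finite_psubset_induct)
  case (psubset Q)
  obtain t where t: "t \<in> T" "\<forall>s\<in>Q. f t0 s \<le> f t s" and "\<exists>s\<in>Q. f t0 s < f t s"
    using psubset.prems(2)[of Q] psubset.prems(1) by blast
  have pure: "(\<Sum>x\<in>T. of_bool (x = t) * f x s) = f t s" for s
    using assms(1) t(1) by (simp add: sum.delta)
  define Q' where "Q' = {s\<in>Q. f t s \<le> f t0 s}"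
  have "Q' \<subset> Q"
  proof
    show "Q' \<subseteq> Q" by (auto simp: Q'_def)
    from \<open>\<exists>s\<in>Q. f t0 s < f t s\<close> obtain s where "s \<in> Q" "f t0 s < f t s" ..
    then have "s \<notin> Q'" by (simp add: Q'_def)
    with \<open>s \<in> Q\<close> show "Q' \<noteq> Q" by blast
  qed
  show ?case
  proof (cases "Q' = {}")
    case True
    then have "\<forall>s\<in>Q. f t0 s < f t s" by (auto simp: Q'_def)
    then show ?thesis
      using t(1) assms(1) pure by (intro exI[of _ "\<lambda>x. of_bool (x = t)"]) simp
  next
    case False
    \<comment> \<open>By induction a mixture \<open>\<sigma>'\<close> strictly beats \<open>t0\<close> where \<open>t\<close> does not; shifting a
      small weight from \<open>t\<close> to \<open>\<sigma>'\<close> keeps the strict advantages of \<open>t\<close>.\<close>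
    have "\<exists>t\<in>T. (\<forall>s\<in>Q''. f t0 s \<le> f t s) \<and> (\<exists>s\<in>Q''. f t0 s < f t s)"
      if "Q'' \<noteq> {}" "Q'' \<subseteq> Q'" for Q''
      using psubset.prems(2) that \<open>Q' \<subset> Q\<close> by (meson order.trans psubset_imp_subset)
    from psubset.IH[OF \<open>Q' \<subset> Q\<close> False this]
    obtain \<sigma>' where \<sigma>': "\<forall>t\<in>T. 0 \<le> \<sigma>' t" "sum \<sigma>' T = 1"
        "\<forall>s\<in>Q'. f t0 s < (\<Sum>t\<in>T. \<sigma>' t * f t s)"
      by blast
    define g where "g s = (\<Sum>t\<in>T. \<sigma>' t * f t s)" for s
    have "\<forall>s\<in>Q - Q'. f t0 s < f t s" by (auto simp: Q'_def)
    then obtain e where e: "0 < e" "e < 1" "\<forall>s\<in>Q - Q'. f t0 s < (1 - e) * f t s + e * g s"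
      using small_mixture_preserves_strict_bounds[of "Q - Q'" "f t0" "f t" g] psubset.hyps(1)
      by auto
    define \<tau> where "\<tau> x = (1 - e) * of_bool (x = t) + e * \<sigma>' x" for x
    have mix: "(\<Sum>x\<in>T. \<tau> x * f x s) = (1 - e) * f t s + e * g s" for s
    proof -
      have "(\<Sum>x\<in>T. \<tau> x * f x s)
          = (1 - e) * (\<Sum>x\<in>T. of_bool (x = t) * f x s) + e * g s"
        by (simp add: \<tau>_def g_def distrib_right sum.distrib sum_distrib_left mult.assoc)
      then show ?thesis by (simp only: pure)
    qed
    have "f t0 s < (1 - e) * f t s + e * g s" if "s \<in> Q'" for s
    proof -
      have "f t0 s \<le> f t s" using t(2) that \<open>Q' \<subset> Q\<close> by blast
      with e(2) have "(1 - e) * f t0 s \<le> (1 - e) * f t s" by (simp add: mult_left_mono)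
      moreover have "f t0 s < g s" using \<sigma>'(3) that by (simp add: g_def)
      with e(1) have "e * f t0 s < e * g s" by simp
      ultimately show ?thesis by (simp add: algebra_simps)
    qed
    with e(3) have "\<forall>s\<in>Q. f t0 s < (\<Sum>x\<in>T. \<tau> x * f x s)"
      by (simp add: mix) blast
    moreover have "sum \<tau> T = 1"
      using assms(1) t(1) \<sigma>'(2) by (simp add: \<tau>_def sum.distrib sum_distrib_left[symmetric])
    moreover have "\<forall>x\<in>T. 0 \<le> \<tau> x" using e \<sigma>'(1) by (simp add: \<tau>_def)
    ultimately show ?thesis by blast
  qed
qed

lemma finite_gameD:
  assumes "finite_game G"
  shows finite_players: "finite (players G)"
    and finite_hists: "finite (hists G)"
    and Nil_in_hists: "[] \<in> hists G"
    and finite_acts: "nonterm G h \<Longrightarrow> i \<in> players G \<Longrightarrow> finite (acts G i h)"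
    and acts_nonempty: "nonterm G h \<Longrightarrow> i \<in> players G \<Longrightarrow> acts G i h \<noteq> {}"
    and snoc_in_hists: "nonterm G h \<Longrightarrow> h @ [a] \<in> hists G \<longleftrightarrow> a \<in> (\<Pi>\<^sub>E j\<in>players G. acts G j h)"
    and Union_info: "i \<in> players G \<Longrightarrow> \<Union>(info G i) = {h. active G i h}"
    and info_nonempty: "i \<in> players G \<Longrightarrow> X \<in> info G i \<Longrightarrow> X \<noteq> {}"
    and info_disjoint: "i \<in> players G \<Longrightarrow> X \<in> info G i \<Longrightarrow> Y \<in> info G i \<Longrightarrow> X \<noteq> Y \<Longrightarrow> X \<inter> Y = {}"
  using assms by (simp_all add: finite_game_def)

lemma on_path_snocD:
  assumes "on_path G p (h @ [a])"
  shows "on_path G p h \<and> nonterm G h \<and> a = next_prof G p h"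
  using assms by (cases rule: on_path.cases) auto

lemma on_path_same_length:
  assumes "on_path G p h" and "on_path G p h'" and "length h = length h'"
  shows "h = h'"
  using assms
proof (induction arbitrary: h' rule: on_path.induct)
  case Nil
  then show ?case by simp
next
  case (step h)
  obtain h'' b where h': "h' = h'' @ [b]"
    using step.prems(2) by (cases h' rule: rev_exhaust) auto
  with on_path_snocD step.prems(1) have "on_path G p h''" "b = next_prof G p h''"
    by blast+
  with step.IH[of h''] step.prems h' show ?case by auto
qed

lemma on_path_take:
  assumes "on_path G p h"
  shows "on_path G p (take k h)"
  using assms
proof (induction rule: on_path.induct)
  case Nil
  then show ?case by (simp add: on_path.Nil)
next
  case (step h)
  then show ?case
    by (cases "k \<le> length h") (simp_all add: on_path.step)
qed

lemma on_path_terminal_unique: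
  assumes "on_path G p z" "terminal G z" "on_path G p z'" "terminal G z'"
  shows "z = z'"
proof -
  \<comment> \<open>A play extending a terminal history would continue it by one more profile.\<close>
  have False if "on_path G p x" "terminal G x" "on_path G p y" "length x < length y" for x y
  proof -
    have "take (length x) y = x"
      using on_path_same_length[OF on_path_take[OF that(3)] that(1)] that(4) by simp
    with that(4) have "take (Suc (length x)) y = x @ [y ! length x]"
      by (simp add: take_Suc_conv_app_nth)
    with on_path_take[OF that(3), of "Suc (length x)"] have "nonterm G x"
      using on_path_snocD by metis
    with that(2) show False by (simp add: nonterm_def)
  qed
  with assms on_path_same_length show ?thesis
    by (metis linorder_neqE_nat)
qed

lemma on_path_terminal_exists:
  assumes "finite (hists G)" and "\<And>h. on_path G p h \<Longrightarrow> h \<in> hists G"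
  shows "\<exists>z. terminal G z \<and> on_path G p z"
proof -
  define P where "P = {h. on_path G p h}"
  have "finite P"
    using assms by (metis (mono_tags) P_def finite_subset mem_Collect_eq subsetI)
  moreover have "[] \<in> P" by (simp add: P_def on_path.Nil)
  ultimately have "Max (length ` P) \<in> length ` P" by (intro Max_in) auto
  then obtain z where z: "z \<in> P" "length z = Max (length ` P)" by force
  have "\<not> nonterm G z"
  proof
    assume "nonterm G z"
    with z(1) have "z @ [next_prof G p z] \<in> P" by (simp add: P_def on_path.step)
    with \<open>finite P\<close> have "length (z @ [next_prof G p z]) \<le> length z"
      unfolding z(2) by (intro Max_ge finite_imageI imageI)
    then show False by simp
  qed
  with z(1) assms(2) show ?thesis by (auto simp: P_def nonterm_def)
qed

lemma infoset_of_mem: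
  assumes "finite_game G" and "k \<in> players G" and "active G k h"
  shows "infoset_of G k h \<in> info G k" and "h \<in> infoset_of G k h"
proof -
  from Union_info[OF assms(1,2)] assms(3) obtain X where "X \<in> info G k" "h \<in> X" by blast
  with info_disjoint[OF assms(1,2)] have "\<exists>!X. X \<in> info G k \<and> h \<in> X" by blast
  from theI'[OF this] show "infoset_of G k h \<in> info G k" "h \<in> infoset_of G k h"
    unfolding infoset_of_def by simp_all
qed

lemma next_prof_cong:
  assumes "\<And>k. k \<in> players G \<Longrightarrow> active G k h \<Longrightarrow>
             p k (infoset_of G k h) = q k (infoset_of G k h)"
  shows "next_prof G p h = next_prof G q h"
  unfolding next_prof_def using assms by (intro restrict_ext) simp

lemma next_prof_in_acts:
  assumes fg: "finite_game G" and std: "\<forall>k\<in>players G. \<sigma> k \<in> std_strats G k"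
    and "nonterm G h"
  shows "next_prof G \<sigma> h \<in> (\<Pi>\<^sub>E k\<in>players G. acts G k h)"
proof -
  have "(if active G k h then the (\<sigma> k (infoset_of G k h)) else the_elem (acts G k h))
          \<in> acts G k h" if k: "k \<in> players G" for k
  proof (cases "active G k h")
    case True
    with std k infoset_of_mem[OF fg k True] show ?thesis
      unfolding std_strats_def by auto
  next
    case False
    \<comment> \<open>An inactive player has exactly one available action.\<close>
    from acts_nonempty[OF fg \<open>nonterm G h\<close> k] have "acts G k h \<noteq> {}" .
    moreover from False \<open>nonterm G h\<close> k have "\<forall>a\<in>acts G k h. \<forall>b\<in>acts G k h. a = b"
      unfolding active_def by auto
    ultimately obtain a where "acts G k h = {a}" by blast
    with False show ?thesis by simp
  qed
  then show ?thesis unfolding next_prof_def by auto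
qed

lemma on_path_in_hists:
  assumes fg: "finite_game G" and std: "\<forall>k\<in>players G. \<sigma> k \<in> std_strats G k"
    and "on_path G \<sigma> h"
  shows "h \<in> hists G"
  using assms(3)
proof (induction rule: on_path.induct)
  case Nil
  from fg show ?case by (rule Nil_in_hists)
next
  case (step h)
  with next_prof_in_acts[OF fg std] show ?case
    by (simp add: snoc_in_hists[OF fg])
qed

text \<open>A reduced strategy prescribes the same actions as its standard representatives on the
  information sets they allow, and the play only passes through such information sets.\<close>

lemma on_path_std_representative:
  assumes fg: "finite_game G" and ps: "\<forall>k\<in>players G. p k \<in> Strats G k"
  obtains \<sigma> where "\<forall>k\<in>players G. \<sigma> k \<in> std_strats G k"
    and "\<And>h. on_path G p h \<Longrightarrow> on_path G \<sigma> h"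
proof -
  from ps have "\<forall>k\<in>players G. \<exists>s. s \<in> std_strats G k \<and>
                  p k = s |` {X \<in> info G k. allows G k s X}"
    unfolding Strats_def by blast
  then obtain \<sigma> where \<sigma>: "\<And>k. k \<in> players G \<Longrightarrow> \<sigma> k \<in> std_strats G k"
      "\<And>k. k \<in> players G \<Longrightarrow> p k = \<sigma> k |` {X \<in> info G k. allows G k (\<sigma> k) X}"
    by metis
  have "on_path G \<sigma> h" if "on_path G p h" for h
    using that
  proof (induction rule: on_path.induct)
    case Nil
    show ?case by (rule on_path.Nil)
  next
    case (step h)
    have "p k (infoset_of G k h) = \<sigma> k (infoset_of G k h)"
      if k: "k \<in> players G" and act: "active G k h" for k
    proof -
      note X = infoset_of_mem[OF fg k act]
      have "allows G k (\<sigma> k) (infoset_of G k h)"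
        unfolding allows_def using \<sigma>(1) X(2) step.IH by blast
      with \<sigma>(2)[OF k] X(1) show ?thesis by simp
    qed
    then have "next_prof G p h = next_prof G \<sigma> h" by (rule next_prof_cong)
    with on_path.step[OF step.IH step.hyps(2)] show ?case by simp
  qed
  with \<sigma>(1) show thesis using that by blast
qed

lemma zeta_in_Zset:
  assumes fg: "finite_game G" and ps: "\<forall>k\<in>players G. p k \<in> Strats G k"
  shows "zeta G p \<in> Zset G"
proof -
  obtain \<sigma> where std: "\<forall>k\<in>players G. \<sigma> k \<in> std_strats G k"
    and path: "\<And>h. on_path G p h \<Longrightarrow> on_path G \<sigma> h"
    using on_path_std_representative[OF fg ps] by blast
  from finite_hists[OF fg] on_path_in_hists[OF fg std] path
  obtain z where z: "terminal G z" "on_path G p z"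
    using on_path_terminal_exists by blast
  with on_path_terminal_unique have "\<exists>!z. z \<in> Zset G \<and> on_path G p z"
    unfolding Zset_def by blast
  from theI'[OF this] show ?thesis unfolding zeta_def by blast
qed

lemma zeta_join_in_Zset:
  assumes "finite_game G" and "t \<in> Strats G i" and "smi \<in> Strats_others G i"
  shows "zeta G (join i t smi) \<in> Zset G"
  using assms(2,3)
  by (intro zeta_in_Zset[OF assms(1)]) (auto simp: join_def Strats_others_def PiE_iff)

lemma finite_Strats:
  assumes fg: "finite_game G" and i: "i \<in> players G"
  shows "finite (Strats G i)"
proof -
  note cover = Union_info[OF fg i] and fh = finite_hists[OF fg]
  have active_hists: "{h. active G i h} \<subseteq> hists G"
    unfolding active_def nonterm_def by auto
  with cover have "info G i \<subseteq> Pow (hists G)" by blast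
  with fh have "finite (info G i)" by (simp add: finite_subset)
  define B where "B = (\<Union>h\<in>{h. active G i h}. acts G i h)"
  have "finite B"
    unfolding B_def
  proof (rule finite_UN_I)
    show "finite {h. active G i h}" using active_hists fh finite_subset by blast
    fix h assume "h \<in> {h. active G i h}"
    then show "finite (acts G i h)"
      using finite_acts[OF fg _ i] by (simp add: active_def)
  qed
  have "dom s = info G i \<and> ran s \<subseteq> B" if s: "s \<in> std_strats G i" for s
  proof
    from s show dom: "dom s = info G i" unfolding std_strats_def by simp
    show "ran s \<subseteq> B"
    proof
      fix a assume "a \<in> ran s"
      then obtain X where sX: "s X = Some a" unfolding ran_def by auto
      with dom have X: "X \<in> info G i" by auto
      with info_nonempty[OF fg i] obtain h where h: "h \<in> X" by blast
      with s X sX have "a \<in> acts G i h" unfolding std_strats_def by force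
      moreover from cover X h have "active G i h" by blast
      ultimately show "a \<in> B" unfolding B_def by blast
    qed
  qed
  then have "std_strats G i \<subseteq> {m. dom m = info G i \<and> ran m \<subseteq> B}" by blast
  from this finite_set_of_finite_maps[OF \<open>finite (info G i)\<close> \<open>finite B\<close>]
  have "finite (std_strats G i)" by (rule finite_subset)
  then show ?thesis unfolding Strats_def by simp
qed

lemma finite_Strats_others:
  assumes "finite_game G"
  shows "finite (Strats_others G i)"
  unfolding Strats_others_def
  using finite_players[OF assms] finite_Strats[OF assms] by (intro finite_PiE) auto

lemma weakly_dominated_by_utility:
  assumes ur: "utility_rep G i ui" and wd: "weakly_dominated_by G i Ps Q si ti"
    and Z: "\<And>smi. smi \<in> Q \<Longrightarrow> zeta G (join i si smi) \<in> Zset G \<and> zeta G (join i ti smi) \<in> Zset G"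
  shows "\<forall>smi\<in>Q. ui (zeta G (join i si smi)) \<le> ui (zeta G (join i ti smi))"
    and "\<exists>smi\<in>Q. ui (zeta G (join i si smi)) < ui (zeta G (join i ti smi))"
proof -
  have rep: "ui (zeta G (join i si smi)) \<le> ui (zeta G (join i ti smi)) \<longleftrightarrow>
      pref G i (zeta G (join i ti smi)) (zeta G (join i si smi))"
    and rep': "ui (zeta G (join i ti smi)) \<le> ui (zeta G (join i si smi)) \<longleftrightarrow>
      pref G i (zeta G (join i si smi)) (zeta G (join i ti smi))"
    if "smi \<in> Q" for smi
    using ur Z[OF that] unfolding utility_rep_def by blast+
  from wd rep show "\<forall>smi\<in>Q. ui (zeta G (join i si smi)) \<le> ui (zeta G (join i ti smi))"
    unfolding weakly_dominated_by_def by blast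
  from wd obtain smi where smi: "smi \<in> Q"
    and "\<not> pref G i (zeta G (join i si smi)) (zeta G (join i ti smi))"
    unfolding weakly_dominated_by_def strict_pref_def by blast
  with rep'[OF smi] have "ui (zeta G (join i si smi)) < ui (zeta G (join i ti smi))"
    by simp
  with smi show "\<exists>smi\<in>Q. ui (zeta G (join i si smi)) < ui (zeta G (join i ti smi))"
    by blast
qed

lemma B_dominated_imp_strictly_dominated_mixed:
  assumes "utility_rep G i ui" and "B_dominated G i Ps Pmi si"
    and "finite Ps" and "finite Pmi" and "Pmi \<noteq> {}"
    and "\<And>t smi. t \<in> Ps \<Longrightarrow> smi \<in> Pmi \<Longrightarrow> zeta G (join i t smi) \<in> Zset G"
  shows "strictly_dominated_mixed G i ui Ps Pmi si"
proof -
  define f where "f t smi = ui (zeta G (join i t smi))" for t smi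
  have si: "si \<in> Ps" using assms(2) unfolding B_dominated_def by blast
  have "\<exists>t\<in>Ps. (\<forall>s\<in>Q. f si s \<le> f t s) \<and> (\<exists>s\<in>Q. f si s < f t s)"
    if "Q \<noteq> {}" "Q \<subseteq> Pmi" for Q
  proof -
    from assms(2) that obtain t where t: "t \<in> Ps" "weakly_dominated_by G i Ps Q si t"
      unfolding B_dominated_def by blast
    have "zeta G (join i si smi) \<in> Zset G \<and> zeta G (join i t smi) \<in> Zset G"
      if "smi \<in> Q" for smi
      using assms(6) si t(1) that \<open>Q \<subseteq> Pmi\<close> by blast
    from weakly_dominated_by_utility[OF assms(1) t(2) this] t(1)
    show ?thesis unfolding f_def by blast
  qed
  from dominated_on_subsets_imp_strictly_dominated_by_mixture[OF assms(3-5) this]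
  show ?thesis unfolding strictly_dominated_mixed_def f_def by blast
qed

lemma MM_subset_UU:
  assumes fg: "finite_game G" and "utility_rep G i (u i)" and "i \<in> players G"
  shows "MM G R u i \<subseteq> UU G R i"
proof
  fix si assume si: "si \<in> MM G R u i"
  show "si \<in> UU G R i"
  proof (rule ccontr)
    assume "si \<notin> UU G R i"
    with si obtain X where X: "X \<in> Hs G i si" "R_at G R i X \<noteq> {}" "R_others_at G R i X \<noteq> {}"
        "B_dominated G i (R_at G R i X) (R_others_at G R i X) si"
      unfolding MM_def UU_def cond_B_dominated_def by blast
    have Ps: "R_at G R i X \<subseteq> Strats G i"
      unfolding R_at_def Strats_at_def by blast
    have Pmi: "R_others_at G R i X \<subseteq> Strats_others G i"
      unfolding R_others_at_def Strats_others_at_def by blast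
    have "strictly_dominated_mixed G i (u i) (R_at G R i X) (R_others_at G R i X) si"
    proof (rule B_dominated_imp_strictly_dominated_mixed[OF assms(2) X(4) _ _ X(3)])
      show "finite (R_at G R i X)"
        using Ps finite_Strats[OF fg assms(3)] by (rule finite_subset)
      show "finite (R_others_at G R i X)"
        using Pmi finite_Strats_others[OF fg] by (rule finite_subset)
      show "zeta G (join i t smi) \<in> Zset G"
        if "t \<in> R_at G R i X" "smi \<in> R_others_at G R i X" for t smi
        using that Ps Pmi by (blast intro: zeta_join_in_Zset[OF fg])
    qed
    with si X(1-3) show False unfolding MM_def by blast
  qed
qed

theorem proposition4:
  fixes G :: "('i,'a) game"
    and u :: "'i \<Rightarrow> ('i,'a) hist \<Rightarrow> real"
    and R :: "'i \<Rightarrow> ('i,'a) strat set"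
  assumes "finite_game G"
    and "\<forall>j\<in>players G. utility_rep G j (u j)"
    and "restriction G R"
  shows "(\<Pi>\<^sub>E j\<in>players G. MM G R u j) \<subseteq> (\<Pi>\<^sub>E j\<in>players G. UU G R j)"
  using MM_subset_UU[OF assms(1)] assms(2) by (intro PiE_mono) blast

end
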